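(* Suppose $\mathcal I_{CAS}=\langle\mathcal I,\chi\rangle$ is a justified CAS-model of a DL-Lite$_R$ DKB $\mathcal K'$. Then $\mathcal I_{CAS}$ is not necessarily a justified CAS-model of every $\mathcal K\subset\mathcal K'$; that is, there exist a DKB $\mathcal K'$, a justified CAS-model $\mathcal I_{CAS}$ of $\mathcal K'$ and a DKB $\mathcal K\subset\mathcal K'$ such that $\mathcal I_{CAS}$ is not a justified CAS-model of $\mathcal K$.
   Context: DL-Lite$_R$: pairwise disjoint countably infinite sets $\mathrm{NC}$, $\mathrm{NR}$, $\mathrm{NI}$; a role is $R$ or $R^-$; concepts $C ::= A\mid\exists R$ (left), $D ::= A\mid\neg C\mid\exists R$ (right). Axioms: $C\sqsubseteq D$, $S\sqsubseteq R$, $\mathrm{Dis}(R,S)$, $\mathrm{Inv}(R,S)$, $\mathrm{Irr}(R)$ (no reflexivity), assertions $D(a)$, $R(a,b)$, usual semantics. Standard name assumption: an infinite set $\mathrm{NI}_S\subseteq\mathrm{NI}$ of standard names is the domain of every interpretation, $c^{\mathcal I}=c$ for $c\in\mathrm{NI}_S$. Axioms are identified with universal first-order sentences $\forall\vec x\,\phi_\alpha(\vec x)$ via the standard translation with right-hand existentials Skolemized by a unary Skolem function $f_R$ per atomic role; $\alpha(\vec e):=\phi_\alpha(\vec e)$. A DKB is a finite set of DL-Lite$_R$ axioms and defeasible axioms $\mathrm D(\alpha)$. Clashing assumption $\langle\alpha,\vec e\rangle$; clashing set: satisfiable set $S$ of assertions and negated assertions with $S\cup\{\alpha(\vec e)\}$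 unsatisfiable. $\langle\mathcal I,\chi\rangle$ ($\chi$ a set of clashing assumptions) is a CAS-model of $\mathcal K$ if $\mathcal I$ satisfies the non-defeasible axioms of $\mathcal K$ and $\mathcal I\models\phi_\alpha(\vec d)$ for all $\mathrm D(\alpha)\in\mathcal K$ and tuples $\vec d$ with $\langle\alpha,\vec d\rangle\notin\chi$. NI-congruent: same interpretation of all constants in $\mathrm{NI}$. $\langle\alpha,\vec e\rangle\in\chi$ is justified if some clashing set for it holds in every CAS-model $\langle\mathcal I',\chi\rangle$ of $\mathcal K$ NI-congruent to $\langle\mathcal I,\chi\rangle$; a CAS-model is justified if all its clashing assumptions are justified. *)

theory Defs
  imports Main "HOL-Library.Countable"
begin

section \<open>Syntax of DL-Lite_R (NC = 'c, NR = 'r, NI = 'i)\<close>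

datatype 'r role = Atom 'r | Inv 'r

datatype ('c,'r) lconcept = LA 'c | LEx "'r role"

datatype ('c,'r) rconcept = RA 'c | RNeg "('c,'r) lconcept" | REx "'r role"

datatype ('c,'r,'i) axiom =
    CInc "('c,'r) lconcept" "('c,'r) rconcept"
  | RInc "'r role" "'r role"
  | DisAx "'r role" "'r role"
  | InvAx "'r role" "'r role"
  | IrrAx "'r role"
  | CAs "('c,'r) rconcept" 'i
  | RAs "'r role" 'i 'i

text \<open>A DKB is a finite set of (strict) axioms and defeasible axioms D(alpha).\<close>
datatype ('c,'r,'i) kaxiom = Strict "('c,'r,'i) axiom" | Def "('c,'r,'i) axiom"

datatype ('c,'r,'i) assertion = CAss "('c,'r) rconcept" 'i | RAss "'r role" 'i 'i

type_synonym ('c,'r,'i) literal = "bool \<times> ('c,'r,'i) assertion"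

text \<open>An interpretation also interprets the Skolem functions (one unary
  function per role).  Its domain is the set NS of standard names.\<close>
record ('c,'r,'i) interp =
  conc :: "'c \<Rightarrow> 'i set"
  rol  :: "'r \<Rightarrow> ('i \<times> 'i) set"
  cst  :: "'i \<Rightarrow> 'i"
  sk   :: "'r role \<Rightarrow> 'i \<Rightarrow> 'i"

definition is_interp :: "'i set \<Rightarrow> ('c,'r,'i) interp \<Rightarrow> bool" where
  "is_interp NS I \<longleftrightarrow>
     (\<forall>A. conc I A \<subseteq> NS) \<and> (\<forall>R. rol I R \<subseteq> NS \<times> NS) \<and>
     (\<forall>a. cst I a \<in> NS) \<and> (\<forall>c\<in>NS. cst I c = c) \<and>
     (\<forall>R. \<forall>d\<in>NS. sk I R d \<in> NS)"

fun rsem :: "('c,'r,'i) interp \<Rightarrow> 'r role \<Rightarrow> ('i \<times> 'i) set" where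
  "rsem I (Atom r) = rol I r"
| "rsem I (Inv r) = (rol I r)\<inverse>"

fun lvars :: "('c,'r) lconcept \<Rightarrow> nat" where
  "lvars (LA _) = 0" | "lvars (LEx _) = 1"

fun rvars :: "('c,'r) rconcept \<Rightarrow> nat" where
  "rvars (RA _) = 0" | "rvars (REx _) = 0" | "rvars (RNeg C) = lvars C"

fun arity :: "('c,'r,'i) axiom \<Rightarrow> nat" where
  "arity (CInc C D) = 1 + lvars C + rvars D"
| "arity (RInc R S) = 2"
| "arity (DisAx R S) = 2"
| "arity (InvAx R S) = 2"
| "arity (IrrAx R) = 1"
| "arity (CAs D a) = rvars D"
| "arity (RAs R a b) = 0"

text \<open>Left concept as antecedent atom C(x) (with extra universal variable for
  an existential); right concept as consequent, existentials Skolemized.\<close>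
fun lhold :: "('c,'r,'i) interp \<Rightarrow> ('c,'r) lconcept \<Rightarrow> 'i \<Rightarrow> 'i list \<Rightarrow> bool" where
  "lhold I (LA A) x ys = (x \<in> conc I A)"
| "lhold I (LEx R) x ys = ((x, hd ys) \<in> rsem I R)"

fun rhold :: "('c,'r,'i) interp \<Rightarrow> ('c,'r) rconcept \<Rightarrow> 'i \<Rightarrow> 'i list \<Rightarrow> bool" where
  "rhold I (RA A) x zs = (x \<in> conc I A)"
| "rhold I (REx R) x zs = ((x, sk I R x) \<in> rsem I R)"
| "rhold I (RNeg C) x zs = (\<not> lhold I C x zs)"

text \<open>inst I alpha ds: I satisfies phi_alpha(ds) (ds of length arity alpha).\<close>
fun inst :: "('c,'r,'i) interp \<Rightarrow> ('c,'r,'i) axiom \<Rightarrow> 'i list \<Rightarrow> bool" where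
  "inst I (CInc C D) ds =
     (lhold I C (hd ds) (take (lvars C) (tl ds)) \<longrightarrow>
      rhold I D (hd ds) (drop (lvars C) (tl ds)))"
| "inst I (RInc R S) ds = ((ds!0, ds!1) \<in> rsem I R \<longrightarrow> (ds!0, ds!1) \<in> rsem I S)"
| "inst I (DisAx R S) ds = (\<not> ((ds!0, ds!1) \<in> rsem I R \<and> (ds!0, ds!1) \<in> rsem I S))"
| "inst I (InvAx R S) ds = ((ds!0, ds!1) \<in> rsem I R \<longleftrightarrow> (ds!1, ds!0) \<in> rsem I S)"
| "inst I (IrrAx R) ds = ((ds!0, ds!0) \<notin> rsem I R)"
| "inst I (CAs D a) ds = rhold I D (cst I a) ds"
| "inst I (RAs R a b) ds = ((cst I a, cst I b) \<in> rsem I R)"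

definition tuples :: "'i set \<Rightarrow> ('c,'r,'i) axiom \<Rightarrow> 'i list set" where
  "tuples NS \<alpha> = {ds. length ds = arity \<alpha> \<and> set ds \<subseteq> NS}"

definition holds_ax :: "'i set \<Rightarrow> ('c,'r,'i) interp \<Rightarrow> ('c,'r,'i) axiom \<Rightarrow> bool" where
  "holds_ax NS I \<alpha> \<longleftrightarrow> (\<forall>ds\<in>tuples NS \<alpha>. inst I \<alpha> ds)"

fun lext :: "('c,'r,'i) interp \<Rightarrow> ('c,'r) lconcept \<Rightarrow> 'i set" where
  "lext I (LA A) = conc I A"
| "lext I (LEx R) = Domain (rsem I R)"

fun rext :: "'i set \<Rightarrow> ('c,'r,'i) interp \<Rightarrow> ('c,'r) rconcept \<Rightarrow> 'i set" where
  "rext NS I (RA A) = conc I A"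
| "rext NS I (REx R) = Domain (rsem I R)"
| "rext NS I (RNeg C) = NS - lext I C"

fun ass_holds :: "'i set \<Rightarrow> ('c,'r,'i) interp \<Rightarrow> ('c,'r,'i) assertion \<Rightarrow> bool" where
  "ass_holds NS I (CAss D a) = (cst I a \<in> rext NS I D)"
| "ass_holds NS I (RAss R a b) = ((cst I a, cst I b) \<in> rsem I R)"

definition lit_holds :: "'i set \<Rightarrow> ('c,'r,'i) interp \<Rightarrow> ('c,'r,'i) literal \<Rightarrow> bool" where
  "lit_holds NS I l \<longleftrightarrow> (if fst l then ass_holds NS I (snd l) else \<not> ass_holds NS I (snd l))"

definition satisfiable :: "'i set \<Rightarrow> ('c,'r,'i) literal set \<Rightarrow> bool" where
  "satisfiable NS S \<longleftrightarrow> (\<exists>I. is_interp NS I \<and> (\<forall>l\<in>S. lit_holds NS I l))"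

definition clashing_set :: "'i set \<Rightarrow> ('c,'r,'i) literal set \<Rightarrow> ('c,'r,'i) axiom \<Rightarrow> 'i list \<Rightarrow> bool" where
  "clashing_set NS S \<alpha> e \<longleftrightarrow>
     e \<in> tuples NS \<alpha> \<and> satisfiable NS S \<and>
     \<not> (\<exists>I. is_interp NS I \<and> (\<forall>l\<in>S. lit_holds NS I l) \<and> inst I \<alpha> e)"

definition cas_model :: "'i set \<Rightarrow> ('c,'r,'i) kaxiom set \<Rightarrow> ('c,'r,'i) interp
    \<Rightarrow> (('c,'r,'i) axiom \<times> 'i list) set \<Rightarrow> bool" where
  "cas_model NS K I \<chi> \<longleftrightarrow>
     is_interp NS I \<and>
     (\<forall>\<alpha>. Strict \<alpha> \<in> K \<longrightarrow> holds_ax NS I \<alpha>) \<and>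
     (\<forall>\<alpha> ds. Def \<alpha> \<in> K \<and> ds \<in> tuples NS \<alpha> \<and> (\<alpha>, ds) \<notin> \<chi> \<longrightarrow> inst I \<alpha> ds)"

definition justified_cas :: "'i set \<Rightarrow> ('c,'r,'i) kaxiom set \<Rightarrow> ('c,'r,'i) interp
    \<Rightarrow> (('c,'r,'i) axiom \<times> 'i list) set \<Rightarrow> bool" where
  "justified_cas NS K I \<chi> \<longleftrightarrow>
     cas_model NS K I \<chi> \<and>
     (\<forall>(\<alpha>, e)\<in>\<chi>. \<exists>S. clashing_set NS S \<alpha> e \<and>
        (\<forall>I'. cas_model NS K I' \<chi> \<and> cst I' = cst I \<longrightarrow> (\<forall>l\<in>S. lit_holds NS I' l)))"

end

theory Submission
  imports Defs
begin

(* Take K = {A(a), D(A \<sqsubseteq> B)} and K' = K \<union> {\<not>B(a)}, and let \<chi> override the instance of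
   A \<sqsubseteq> B at a.  In K' the exception is justified by the clashing set {A(a), \<not>B(a)}, which is
   part of the strict ABox and so holds in every CAS-model.  In K nothing forces \<not>B(a): the
   NI-congruent CAS-model with B(a) true satisfies the overridden instance, so no clashing
   set for it can hold in all NI-congruent CAS-models.  Only two concept names and one
   standard name are needed. *)

lemma cst_standard_name: "is_interp NS I \<Longrightarrow> c \<in> NS \<Longrightarrow> cst I c = c"
  by (simp add: is_interp_def)

definition abox_literals :: "('c,'r,'i) kaxiom set \<Rightarrow> ('c,'r,'i) literal set" where
  "abox_literals K =
     {(True, CAss D a) | D a. Strict (CAs D a) \<in> K} \<union>
     {(True, RAss R a b) | R a b. Strict (RAs R a b) \<in> K}"

lemma ass_holds_if_holds_ax_CAs:
  assumes "is_interp NS I" and "holds_ax NS I (CAs D a)"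
  shows "ass_holds NS I (CAss D a)"
proof -
  have a_NS: "cst I a \<in> NS"
    using assms(1) by (simp add: is_interp_def)
  have rsem_NS: "rsem I R \<subseteq> NS \<times> NS" for R
    using assms(1) by (cases R) (auto simp: is_interp_def)
  show ?thesis
  proof (cases D)
    case (RNeg C)
    show ?thesis
    proof (cases C)
      case (LEx R)
      have "(cst I a, d) \<notin> rsem I R" for d
      proof
        assume "(cst I a, d) \<in> rsem I R"
        moreover from this have "[d] \<in> tuples NS (CAs D a)"
          using rsem_NS by (auto simp: tuples_def RNeg LEx)
        ultimately show False
          using assms(2) by (auto simp: holds_ax_def RNeg LEx)
      qed
      then show ?thesis using a_NS by (auto simp: RNeg LEx)
    qed (use assms(2) a_NS in \<open>auto simp: holds_ax_def tuples_def RNeg\<close>)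
  qed (use assms(2) in \<open>auto simp: holds_ax_def tuples_def\<close>)
qed

lemma lit_holds_abox_literals:
  assumes "cas_model NS K I \<chi>" and "l \<in> abox_literals K"
  shows "lit_holds NS I l"
proof -
  have I: "is_interp NS I" and strict: "\<And>\<alpha>. Strict \<alpha> \<in> K \<Longrightarrow> holds_ax NS I \<alpha>"
    using assms(1) by (auto simp: cas_model_def)
  from assms(2) consider D a where "l = (True, CAss D a)" "Strict (CAs D a) \<in> K"
    | R a b where "l = (True, RAss R a b)" "Strict (RAs R a b) \<in> K"
    unfolding abox_literals_def by blast
  then show ?thesis
  proof cases
    case 1
    then show ?thesis
      using ass_holds_if_holds_ax_CAs[OF I strict] by (simp add: lit_holds_def)
  next
    case 2
    have "[] \<in> tuples NS (RAs R a b)"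
      by (simp add: tuples_def)
    then have "inst I (RAs R a b) []"
      using strict[OF 2(2)] unfolding holds_ax_def by blast
    then show ?thesis
      using 2(1) by (simp add: lit_holds_def)
  qed
qed

lemma justified_cas_if_abox_clashing_sets:
  assumes "cas_model NS K I \<chi>"
    and "\<And>\<alpha> e. (\<alpha>, e) \<in> \<chi> \<Longrightarrow> \<exists>S \<subseteq> abox_literals K. clashing_set NS S \<alpha> e"
  shows "justified_cas NS K I \<chi>"
  using assms lit_holds_abox_literals unfolding justified_cas_def by fast

lemma not_justified_cas_if_congruent_model_satisfies:
  assumes "cas_model NS K J \<chi>" and "cst J = cst I"
    and "(\<alpha>, e) \<in> \<chi>" and "inst J \<alpha> e"
  shows "\<not> justified_cas NS K I \<chi>"
proof
  assume "justified_cas NS K I \<chi>"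
  then obtain S where "clashing_set NS S \<alpha> e" and "\<forall>l\<in>S. lit_holds NS J l"
    using assms(1-3) unfolding justified_cas_def by fast
  moreover have "is_interp NS J"
    using assms(1) by (simp add: cas_model_def)
  ultimately show False
    using assms(4) unfolding clashing_set_def by blast
qed

definition incl_kb :: "'c \<Rightarrow> 'c \<Rightarrow> 'i \<Rightarrow> ('c,'r,'i) kaxiom set" where
  "incl_kb A B a = {Strict (CAs (RA A) a), Def (CInc (LA A) (RA B))}"

definition clash_kb :: "'c \<Rightarrow> 'c \<Rightarrow> 'i \<Rightarrow> ('c,'r,'i) kaxiom set" where
  "clash_kb A B a = insert (Strict (CAs (RNeg (LA B)) a)) (incl_kb A B a)"

definition point_interp :: "'i set \<Rightarrow> 'i \<Rightarrow> 'c set \<Rightarrow> ('c,'r,'i) interp" where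
  "point_interp NS a Cs =
     \<lparr>conc = (\<lambda>C. if C \<in> Cs then {a} else {}), rol = (\<lambda>_. {}),
      cst = (\<lambda>x. if x \<in> NS then x else a), sk = (\<lambda>_ d. if d \<in> NS then d else a)\<rparr>"

lemma point_interp_simps [simp]:
  "conc (point_interp NS a Cs) C = (if C \<in> Cs then {a} else {})"
  "rol (point_interp NS a Cs) R = {}"
  "cst (point_interp NS a Cs) x = (if x \<in> NS then x else a)"
  by (simp_all add: point_interp_def)

lemma is_interp_point_interp: "a \<in> NS \<Longrightarrow> is_interp NS (point_interp NS a Cs)"
  by (auto simp: is_interp_def point_interp_def)

lemma tuples_CInc_atomic: "tuples NS (CInc (LA A) (RA B)) = {[d] | d. d \<in> NS}"
  by (auto simp: tuples_def length_Suc_conv)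

lemma tuples_CAs_RA: "tuples NS (CAs (RA A) a) = {[]}"
  by (auto simp: tuples_def)

lemma tuples_CAs_RNeg_LA: "tuples NS (CAs (RNeg (LA A)) a) = {[]}"
  by (auto simp: tuples_def)

lemma cas_model_clash_kb:
  assumes "a \<in> NS" and "A \<noteq> B"
  shows "cas_model NS (clash_kb A B a) (point_interp NS a {A}) {(CInc (LA A) (RA B), [a])}"
  using assms is_interp_point_interp[OF assms(1)]
  by (auto simp: cas_model_def clash_kb_def incl_kb_def holds_ax_def tuples_CAs_RA
      tuples_CAs_RNeg_LA tuples_CInc_atomic)

lemma cas_model_incl_kb:
  assumes "a \<in> NS"
  shows "cas_model NS (incl_kb A B a) (point_interp NS a {A, B}) \<chi>"
  using assms is_interp_point_interp[OF assms(1)]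
  by (auto simp: cas_model_def incl_kb_def holds_ax_def tuples_CAs_RA tuples_CInc_atomic)

lemma clashing_set_clash_kb:
  assumes "a \<in> NS" and "A \<noteq> B"
  shows "clashing_set NS {(True, CAss (RA A) a), (True, CAss (RNeg (LA B)) a)}
           (CInc (LA A) (RA B)) [a]"
  unfolding clashing_set_def
proof (intro conjI)
  show "[a] \<in> tuples NS (CInc (LA A) (RA B))"
    using assms(1) by (simp add: tuples_CInc_atomic)
  show "satisfiable NS {(True, CAss (RA A) a), (True, CAss (RNeg (LA B)) a)}"
    using assms is_interp_point_interp[OF assms(1), of "{A}"]
    unfolding satisfiable_def
    by (auto simp: lit_holds_def intro!: exI[of _ "point_interp NS a {A}"])
  show "\<not> (\<exists>J. is_interp NS J \<and>
      (\<forall>l\<in>{(True, CAss (RA A) a), (True, CAss (RNeg (LA B)) a)}. lit_holds NS J l) \<and>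
      inst J (CInc (LA A) (RA B)) [a])"
    using assms(1) by (auto simp: lit_holds_def cst_standard_name)
qed

lemma abox_clashing_set_clash_kb:
  assumes "a \<in> NS" and "A \<noteq> B"
  shows "\<exists>S \<subseteq> abox_literals (clash_kb A B a). clashing_set NS S (CInc (LA A) (RA B)) [a]"
proof (intro exI conjI)
  show "{(True, CAss (RA A) a), (True, CAss (RNeg (LA B)) a)} \<subseteq> abox_literals (clash_kb A B a)"
    unfolding abox_literals_def clash_kb_def incl_kb_def by blast
qed (rule clashing_set_clash_kb[OF assms])

lemma incl_kb_psubset_clash_kb: "incl_kb A B a \<subset> clash_kb A B a"
  unfolding clash_kb_def by (simp add: psubset_insert_iff incl_kb_def)

theorem proposition4:
  fixes NS :: "'i::countable set"
  assumes "infinite (UNIV :: 'c::countable set)"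
    and "infinite (UNIV :: 'r::countable set)"
    and "infinite (UNIV :: 'i set)"
    and "infinite NS"
  shows "\<exists>(K' :: ('c,'r,'i) kaxiom set) K I \<chi>.
           finite K' \<and> K \<subset> K' \<and> justified_cas NS K' I \<chi> \<and> \<not> justified_cas NS K I \<chi>"
proof -
  obtain A B :: 'c where "A \<noteq> B"
    using ex_new_if_finite[OF assms(1) finite.emptyI]
      ex_new_if_finite[OF assms(1) finite.insertI[OF finite.emptyI]] by blast
  obtain a where "a \<in> NS"
    using infinite_imp_nonempty[OF assms(4)] by blast
  define \<chi> :: "(('c,'r,'i) axiom \<times> 'i list) set" where "\<chi> = {(CInc (LA A) (RA B), [a])}"
  define I :: "('c,'r,'i) interp" where "I = point_interp NS a {A}"
  have "justified_cas NS (clash_kb A B a) I \<chi>"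
  proof (rule justified_cas_if_abox_clashing_sets)
    show "cas_model NS (clash_kb A B a) I \<chi>"
      using \<open>a \<in> NS\<close> \<open>A \<noteq> B\<close> by (simp add: cas_model_clash_kb I_def \<chi>_def)
    show "\<exists>S \<subseteq> abox_literals (clash_kb A B a). clashing_set NS S \<beta> e" if "(\<beta>, e) \<in> \<chi>" for \<beta> e
      using that abox_clashing_set_clash_kb[OF \<open>a \<in> NS\<close> \<open>A \<noteq> B\<close>] by (simp add: \<chi>_def)
  qed
  moreover have "\<not> justified_cas NS (incl_kb A B a) I \<chi>"
    using \<open>a \<in> NS\<close>
    by (intro not_justified_cas_if_congruent_model_satisfies[where J = "point_interp NS a {A, B}"
          and \<alpha> = "CInc (LA A) (RA B)" and e = "[a]"] cas_model_incl_kb)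
      (auto simp: I_def \<chi>_def)
  moreover have "finite (clash_kb A B a :: ('c,'r,'i) kaxiom set)"
    by (simp add: clash_kb_def incl_kb_def)
  moreover have "incl_kb A B a \<subset> (clash_kb A B a :: ('c,'r,'i) kaxiom set)"
    by (rule incl_kb_psubset_clash_kb)
  ultimately show ?thesis
    by blast
qed

end
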